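(* Consider the downlink of a multi-RIS multi-user MIMO system in which a base station (BS) with $M$ antennas serves $U_d$ direct users and $K$ blocked users, the $k$-th blocked user being served only through the $k$-th reconfigurable intelligent surface (RIS), which has $N$ elements. Let $\mathbf{H}_k\in\mathbb{C}^{M\times N}$ be the BS–RIS-$k$ channel, $\mathbf{h}_{k,1}=(h_{k,1},\dots,h_{k,N})^T\in\mathbb{C}^N$ the RIS-$k$–user channel (so $h_{k,i}$ is its $i$-th entry), and $\mathbf{h}_{d,u}\in\mathbb{C}^M$ the BS–direct-user-$u$ channel, all with complex normal entries, $\mathbb{E}\{\mathbf{H}_k^H\mathbf{H}_k\}=\mathbf{R}_k$ (invertible) and $\mathbb{E}\{\mathbf{H}_k^H\mathbf{H}_{k'}\}=\mathbf{0}$ for $k\ne k'$. Let $\mathbf{Q}_2=[\mathbf{H}_1\ \cdots\ \mathbf{H}_K\ \mathbf{h}_{d,1}\ \cdots\ \mathbf{h}_{d,U_d}]^H\in\mathbb{C}^{(NK+U_d)\times M}$ and let $\boldsymbol{\Gamma}\in\mathbb{R}^{(NK+U_d)\times(K+U_d)}$ be the matrix whose $k$-th column ($k\le K$) has ones in rows $(k-1)N+1,\dots,kN$ and zeros elsewhere, and whose last $U_d$ columns are $\begin{bmatrix}\mathbf{0}_{NK\times U_d}\\ \mathbf{I}_{U_d}\end{bmatrix}$. Use the beamforming matrix $\mathbf{W}'_{\mathrm{ZF}}=\mathbf{Q}_2^H(\mathbf{Q}_2\mathbf{Q}_2^H)^{-1}\boldsymbol{\Gamma}$, so that the SINR of the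 blocked user of RIS $k$ with phase shifts $\phi_{k,1},\dots,\phi_{k,N}$ is $$\mathrm{SINR}_{b,k,1}=\frac{\Big|\sum_{i=1}^{N}e^{j\phi_{k,i}}h_{k,i}^{*}\big[\mathbf{H}_k^H\mathbf{Q}_2^H(\mathbf{Q}_2\mathbf{Q}_2^H)^{-1}\boldsymbol{\Gamma}\mathbf{e}_k\big]_i\Big|^2}{\sigma_k^2}.$$ Then, as $M\to\infty$, the phase shifts of the $k$-th RIS that maximize this SINR are $$\phi_{k,i}=-\sphericalangle\big(h_{k,i}^{*}f_{k,i}\big),\qquad i=1,\dots,N,$$ and the maximum SINR is $$\mathrm{SINR}^{*}_{b,k,1}=\frac{1}{\sigma_k^2}\Big(\sum_{i=1}^{N}|f_{k,i}|\,|h_{k,i}|\Big)^2,$$ where $f_{k,i}$ is the $i$-th entry of $$\mathbf{f}_k=\begin{bmatrix}\mathbf{0}_{N\times(k-1)N} & \mathbf{R}_k & \mathbf{0}_{N\times((K-k)N+U_d)}\end{bmatrix}\,\mathrm{blkdiag}\big(\mathbf{R}_1^{-1},\dots,\mathbf{R}_K^{-1},\mathbf{I}_{U_d}\big)\,\boldsymbol{\Gamma}\,\mathbf{e}_k.$$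
   Context: $\mathbf{e}_k$ is the $k$-th standard unit vector of $\mathbb{R}^{K+U_d}$, $\sigma_k^2>0$ is the noise power at the user, $\sphericalangle(z)$ denotes the argument of a complex number $z$, $^*$ complex conjugation, $^H$ conjugate transpose, and $\mathrm{blkdiag}(\cdot)$ the block-diagonal matrix formed from its arguments. The beamformer requires $M>NK+U_d$. The asymptotic regime $M\to\infty$ refers to the limit in which inner products of BS-side channel columns converge to their expectations, i.e. $\mathbf{H}_k^H\mathbf{H}_n\to\mathbf{R}_k$ if $n=k$ and $\to\mathbf{0}$ if $n\ne k$. *)

theory Defs
  imports "HOL-Analysis.Analysis" "Jordan_Normal_Form.Determinant"
begin

definition cT :: "complex mat \<Rightarrow> complex mat" where
  "cT A = mat (dim_col A) (dim_row A) (\<lambda>(i,j). cnj (A $$ (j,i)))"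

text \<open>Matrix inverse via the adjugate (the true inverse whenever det A is nonzero).\<close>
definition minv :: "complex mat \<Rightarrow> complex mat" where
  "minv A = (1 / det A) \<cdot>\<^sub>m adj_mat A"

definition mat_tendsto :: "(nat \<Rightarrow> complex mat) \<Rightarrow> complex mat \<Rightarrow> bool" where
  "mat_tendsto A B \<longleftrightarrow> (\<forall>\<^sub>F M in sequentially. A M \<in> carrier_mat (dim_row B) (dim_col B)) \<and>
     (\<forall>i < dim_row B. \<forall>j < dim_col B. ((\<lambda>M. A M $$ (i,j)) \<longlongrightarrow> B $$ (i,j)) sequentially)"

definition vec_tendsto :: "(nat \<Rightarrow> complex vec) \<Rightarrow> complex vec \<Rightarrow> bool" where
  "vec_tendsto v w \<longleftrightarrow> (\<forall>\<^sub>F M in sequentially. dim_vec (v M) = dim_vec w) \<and>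
     (\<forall>i < dim_vec w. ((\<lambda>M. v M $ i) \<longlongrightarrow> w $ i) sequentially)"

text \<open>Q2^H (an M x (NK+Ud) matrix): columns of H_1,...,H_K, then h_{d,1},...,h_{d,Ud}.
  Indices of RIS and users are 0-based.\<close>
definition Q2H :: "nat \<Rightarrow> nat \<Rightarrow> nat \<Rightarrow> nat \<Rightarrow> (nat \<Rightarrow> complex mat) \<Rightarrow> (nat \<Rightarrow> complex vec) \<Rightarrow> complex mat" where
  "Q2H M N K Ud H hdu = mat M (N*K + Ud)
     (\<lambda>(i,j). if j < N*K then H (j div N) $$ (i, j mod N) else hdu (j - N*K) $ i)"

definition Gamma :: "nat \<Rightarrow> nat \<Rightarrow> nat \<Rightarrow> complex mat" where
  "Gamma N K Ud = mat (N*K + Ud) (K + Ud)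
     (\<lambda>(i,j). if j < K then (if i < N*K \<and> i div N = j then 1 else 0)
              else (if N*K \<le> i \<and> i - N*K = j - K then 1 else 0))"

definition blkdiag_inv :: "nat \<Rightarrow> nat \<Rightarrow> nat \<Rightarrow> (nat \<Rightarrow> complex mat) \<Rightarrow> complex mat" where
  "blkdiag_inv N K Ud R = mat (N*K + Ud) (N*K + Ud)
     (\<lambda>(i,j). if i < N*K \<and> j < N*K then
                 (if i div N = j div N then minv (R (i div N)) $$ (i mod N, j mod N) else 0)
              else if N*K \<le> i \<and> N*K \<le> j then (if i = j then 1 else 0) else 0)"

text \<open>The row-block selector [0_{N x kN}  R_k  0_{N x ((K-k-1)N+Ud)}] (k 0-based).\<close>
definition row_sel :: "nat \<Rightarrow> nat \<Rightarrow> nat \<Rightarrow> (nat \<Rightarrow> complex mat) \<Rightarrow> nat \<Rightarrow> complex mat" where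
  "row_sel N K Ud R k = mat N (N*K + Ud)
     (\<lambda>(i,j). if k*N \<le> j \<and> j < (k+1)*N then R k $$ (i, j - k*N) else 0)"

definition f_vec :: "nat \<Rightarrow> nat \<Rightarrow> nat \<Rightarrow> (nat \<Rightarrow> complex mat) \<Rightarrow> nat \<Rightarrow> complex vec" where
  "f_vec N K Ud R k = col (row_sel N K Ud R k * blkdiag_inv N K Ud R * Gamma N K Ud) k"

definition zf_vec :: "nat \<Rightarrow> nat \<Rightarrow> nat \<Rightarrow> nat \<Rightarrow> (nat \<Rightarrow> complex mat) \<Rightarrow> (nat \<Rightarrow> complex vec) \<Rightarrow> nat \<Rightarrow> complex vec" where
  "zf_vec M N K Ud H hdu k =
     (let Q = Q2H M N K Ud H hdu in
      col (cT (H k) * Q * minv (cT Q * Q) * Gamma N K Ud) k)"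

definition sinr :: "nat \<Rightarrow> real \<Rightarrow> complex vec \<Rightarrow> complex vec \<Rightarrow> (nat \<Rightarrow> real) \<Rightarrow> real" where
  "sinr N sigma2 h v phi = (cmod (\<Sum>i<N. exp (\<i> * complex_of_real (phi i)) * cnj (h $ i) * v $ i))\<^sup>2 / sigma2"

end

theory Submission
  imports Defs
begin

(* Both effective vectors are the all-ones vector. Let S_k (block_rows) select the k-th block
   of N rows. Since Q2H is Q2^H, S_k Q2 = H_k^H, and cT Q2H * Q2H is the Gram matrix Q2 Q2^H;
   hence H_k^H Q2^H (Q2 Q2^H)^-1 Gamma e_k = S_k Gamma e_k = 1 as soon as the Gram matrix is
   invertible. Likewise [0 R_k 0] = S_k blkdiag(R_1, ..., R_K, I), so f_k = S_k Gamma e_k = 1.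
   The Gram matrix converges entrywise to blkdiag(R_1, ..., R_K, I), whose determinant is
   nonzero, so by continuity of det it is invertible for all large M: the SINR is eventually
   constant. Its maximum over the phases is the triangle-inequality bound, attained when every
   summand is rotated onto the positive real axis. *)

lemma cT_carrier [simp]: "A \<in> carrier_mat m n \<Longrightarrow> cT A \<in> carrier_mat n m"
  by (simp add: cT_def)

lemma dim_cT [simp]: "dim_row (cT A) = dim_col A" "dim_col (cT A) = dim_row A"
  by (simp_all add: cT_def)

lemma cT_mult_index:
  assumes "A \<in> carrier_mat m n" "B \<in> carrier_mat m p" "a < n" "b < p"
  shows "(cT A * B) $$ (a, b) = (\<Sum>l<m. cnj (A $$ (l, a)) * B $$ (l, b))"
  using assms by (simp add: cT_def scalar_prod_def atLeast0LessThan)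

lemma cT_mult_vec_index:
  assumes "A \<in> carrier_mat m n" "dim_vec v = m" "a < n"
  shows "(cT A *\<^sub>v v) $ a = (\<Sum>l<m. cnj (A $$ (l, a)) * v $ l)"
  using assms by (simp add: cT_def scalar_prod_def atLeast0LessThan)

lemma minv_carrier: "A \<in> carrier_mat n n \<Longrightarrow> minv A \<in> carrier_mat n n"
  unfolding minv_def using adj_mat(1)[of A n] by simp

lemma mult_minv:
  assumes A: "A \<in> carrier_mat n n" and "det A \<noteq> 0"
  shows "A * minv A = 1\<^sub>m n"
proof -
  have "A * minv A = (1 / det A) \<cdot>\<^sub>m (A * adj_mat A)"
    unfolding minv_def using A adj_mat(1)[OF A] by (simp add: mult_smult_distrib)
  also have "\<dots> = 1\<^sub>m n"
    using adj_mat(2)[OF A] \<open>det A \<noteq> 0\<close> by (auto intro!: eq_matI)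
  finally show ?thesis .
qed

lemma invertible_mat_imp_det_nonzero:
  assumes "invertible_mat A" and A: "A \<in> carrier_mat n n"
  shows "det (A :: 'a :: comm_ring_1 mat) \<noteq> 0"
proof
  assume "det A = 0"
  obtain B where AB: "A * B = 1\<^sub>m n" and BA: "B * A = 1\<^sub>m (dim_row B)"
    using assms unfolding invertible_mat_def inverts_mat_def by auto
  have "B \<in> carrier_mat n n"
    using arg_cong[OF AB, of dim_col] arg_cong[OF BA, of dim_col] A by auto
  then have "det A * det B = 1"
    using det_mult[OF A] AB by (metis det_one)
  with \<open>det A = 0\<close> show False by simp
qed

lemma mat_tendsto_index:
  "mat_tendsto A B \<Longrightarrow> i < dim_row B \<Longrightarrow> j < dim_col B \<Longrightarrow>
    ((\<lambda>M. A M $$ (i, j)) \<longlongrightarrow> B $$ (i, j)) sequentially"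
  by (simp add: mat_tendsto_def)

lemma vec_tendsto_index:
  "vec_tendsto v w \<Longrightarrow> i < dim_vec w \<Longrightarrow> ((\<lambda>M. v M $ i) \<longlongrightarrow> w $ i) sequentially"
  by (simp add: vec_tendsto_def)

lemma tendsto_det:
  assumes lim: "mat_tendsto A B" and B: "B \<in> carrier_mat n n"
  shows "((\<lambda>M. det (A M)) \<longlongrightarrow> det B) sequentially"
proof -
  let ?P = "{p. p permutes {0..<n}}"
  let ?expand = "\<lambda>C. \<Sum>p\<in>?P. signof p * (\<Prod>i = 0..<n. C $$ (i, p i))"
  have "((\<lambda>M. ?expand (A M)) \<longlongrightarrow> ?expand B) sequentially"
  proof (intro tendsto_sum tendsto_mult tendsto_const tendsto_prod)
    fix p i assume "p \<in> ?P" and i: "i \<in> {0..<n}"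
    then have "p i < n" using permutes_in_image[of p "{0..<n}" i] by simp
    then show "((\<lambda>M. A M $$ (i, p i)) \<longlongrightarrow> B $$ (i, p i)) sequentially"
      using mat_tendsto_index[OF lim] B i by auto
  qed
  moreover have "\<forall>\<^sub>F M in sequentially. ?expand (A M) = det (A M)"
    using lim B unfolding mat_tendsto_def by (auto elim!: eventually_mono simp: det_def')
  ultimately show ?thesis
    using det_def'[OF B] by (simp add: tendsto_cong)
qed

lemma block_end_le: "k < K \<Longrightarrow> k * N + N \<le> N * (K::nat)"
  by (metis mult.commute mult_Suc less_eq_Suc_le mult_le_mono1 add.commute)

lemma block_index_less: "k < K \<Longrightarrow> a < N \<Longrightarrow> k * N + a < N * (K::nat)"
  using block_end_le[of k K N] by linarith

lemma div_less_if_less_mult: "i < N * K \<Longrightarrow> i div N < (K::nat)"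
  by (simp add: less_mult_imp_div_less mult.commute)

lemma mod_less_if_less_mult: "i < N * K \<Longrightarrow> i mod N < (N::nat)"
  by (cases N) auto

lemma div_eq_iff_in_block:
  assumes "0 < N" shows "l div N = k \<longleftrightarrow> k * N \<le> l \<and> l < k * N + (N::nat)"
proof -
  have "l div N = k \<longleftrightarrow> k \<le> l div N \<and> l div N < Suc k" by linarith
  then show ?thesis
    using assms by (simp add: less_eq_div_iff_mult_less_eq div_less_iff_less_mult add.commute)
qed

lemma sum_supported_on_block:
  fixes g :: "nat \<Rightarrow> 'a :: comm_monoid_add"
  assumes N: "0 < N" and a: "a < K" and n: "N * K \<le> n"
    and zero: "\<And>l. l < n \<Longrightarrow> l div N \<noteq> a \<Longrightarrow> g l = 0"
  shows "(\<Sum>l<n. g l) = (\<Sum>c<N. g (a * N + c))"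
proof -
  have "(\<Sum>c<N. g (a * N + c)) = sum g ((+) (a * N) ` {..<N})"
    by (simp add: sum.reindex)
  also have "\<dots> = (\<Sum>l<n. g l)"
  proof (rule sum.mono_neutral_left)
    show "(+) (a * N) ` {..<N} \<subseteq> {..<n}"
      using block_index_less[OF a] n by fastforce
    show "\<forall>l\<in>{..<n} - (+) (a * N) ` {..<N}. g l = 0"
    proof
      fix l assume l: "l \<in> {..<n} - (+) (a * N) ` {..<N}"
      have "l div N \<noteq> a"
      proof
        assume "l div N = a"
        then have "l = a * N + l mod N" using div_mult_mod_eq[of l N] by simp
        moreover have "l mod N < N" using N by simp
        ultimately show False using l by blast
      qed
      then show "g l = 0" using l zero by simp
    qed
  qed simp
  finally show ?thesis ..
qed

definition block_rows :: "nat \<Rightarrow> nat \<Rightarrow> nat \<Rightarrow> 'a :: zero_neq_one mat" where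
  "block_rows N n k = mat N n (\<lambda>(a, b). if b = k * N + a then 1 else 0)"

lemma block_rows_carrier [simp]: "block_rows N n k \<in> carrier_mat N n"
  and dim_block_rows [simp]: "dim_row (block_rows N n k) = N" "dim_col (block_rows N n k) = n"
  by (simp_all add: block_rows_def)

lemma block_rows_mult:
  fixes A :: "'a :: semiring_1 mat"
  assumes A: "A \<in> carrier_mat n p" and n: "k * N + N \<le> n"
  shows "block_rows N n k * A = mat N p (\<lambda>(a, j). A $$ (k * N + a, j))"
proof (rule eq_matI)
  fix a j assume "a < dim_row (mat N p (\<lambda>(a, j). A $$ (k * N + a, j)))"
    and "j < dim_col (mat N p (\<lambda>(a, j). A $$ (k * N + a, j)))"
  then have a: "a < N" and j: "j < p" by simp_all
  have "(block_rows N n k * A) $$ (a, j) = (\<Sum>l<n. (if l = k * N + a then 1 else 0) * A $$ (l, j))"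
    using A a j by (simp add: block_rows_def scalar_prod_def atLeast0LessThan)
  also have "\<dots> = (\<Sum>l<n. if l = k * N + a then A $$ (l, j) else 0)"
    by (rule sum.cong) auto
  also have "\<dots> = A $$ (k * N + a, j)"
    using a n by simp
  finally show "(block_rows N n k * A) $$ (a, j) = mat N p (\<lambda>(a, j). A $$ (k * N + a, j)) $$ (a, j)"
    using a j by simp
qed (use A in simp_all)

lemma block_rows_Gamma:
  assumes k: "k < K"
  shows "col (block_rows N (N * K + Ud) k * Gamma N K Ud) k = vec N (\<lambda>_. 1)"
proof (rule eq_vecI)
  have rows: "block_rows N (N * K + Ud) k * Gamma N K Ud
      = mat N (K + Ud) (\<lambda>(a, j). Gamma N K Ud $$ (k * N + a, j))"
    by (rule block_rows_mult) (use block_end_le[OF k, of N] in \<open>simp_all add: Gamma_def\<close>)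
  fix a assume "a < dim_vec (vec N (\<lambda>_. 1 :: complex))"
  then have a: "a < N" by simp
  have "k * N + a < N * K" by (rule block_index_less[OF k a])
  then have "col (mat N (K + Ud) (\<lambda>(a, j). Gamma N K Ud $$ (k * N + a, j))) k $ a = 1"
    using a k by (simp add: Gamma_def)
  then show "col (block_rows N (N * K + Ud) k * Gamma N K Ud) k $ a = vec N (\<lambda>_. 1) $ a"
    using a by (simp add: rows)
qed simp

definition blkdiag :: "nat \<Rightarrow> nat \<Rightarrow> nat \<Rightarrow> (nat \<Rightarrow> 'a :: zero_neq_one mat) \<Rightarrow> 'a mat" where
  "blkdiag N K Ud B = mat (N * K + Ud) (N * K + Ud)
     (\<lambda>(i, j). if i < N * K \<and> j < N * K then
                 (if i div N = j div N then B (i div N) $$ (i mod N, j mod N) else 0)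
              else if N * K \<le> i \<and> N * K \<le> j then (if i = j then 1 else 0) else 0)"

lemma blkdiag_carrier [simp]: "blkdiag N K Ud B \<in> carrier_mat (N * K + Ud) (N * K + Ud)"
  and dim_blkdiag [simp]: "dim_row (blkdiag N K Ud B) = N * K + Ud" "dim_col (blkdiag N K Ud B) = N * K + Ud"
  by (simp_all add: blkdiag_def)

lemma blkdiag_inv_carrier: "blkdiag_inv N K Ud R \<in> carrier_mat (N * K + Ud) (N * K + Ud)"
  by (simp add: blkdiag_inv_def)

lemma blkdiag_inv_eq_blkdiag: "blkdiag_inv N K Ud R = blkdiag N K Ud (\<lambda>n. minv (R n))"
  by (simp add: blkdiag_inv_def blkdiag_def)

lemma blkdiag_index_block_row:
  assumes "a < K" "c < N" "j < N * K + Ud"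
  shows "blkdiag N K Ud B $$ (a * N + c, j) = (if j < N * K \<and> j div N = a then B a $$ (c, j mod N) else 0)"
  using assms block_index_less[OF assms(1,2)] by (auto simp: blkdiag_def)

lemma blkdiag_index_block_col:
  assumes "a < K" "c < N" "i < N * K + Ud"
  shows "blkdiag N K Ud B $$ (i, a * N + c) = (if i < N * K \<and> i div N = a then B a $$ (i mod N, c) else 0)"
  using assms block_index_less[OF assms(1,2)] by (auto simp: blkdiag_def)

lemma blkdiag_cong:
  assumes "\<And>n. n < K \<Longrightarrow> B n = C n"
  shows "blkdiag N K Ud B = blkdiag N K Ud C"
  using assms div_less_if_less_mult by (auto simp: blkdiag_def intro!: eq_matI)

lemma blkdiag_one: "blkdiag N K Ud (\<lambda>_. 1\<^sub>m N) = 1\<^sub>m (N * K + Ud)"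
proof (rule eq_matI)
  fix i j assume "i < dim_row (1\<^sub>m (N * K + Ud))" "j < dim_col (1\<^sub>m (N * K + Ud))"
  moreover have "i = j" if "i div N = j div N" "i mod N = j mod N"
    using that by (metis div_mult_mod_eq)
  ultimately show "blkdiag N K Ud (\<lambda>_. 1\<^sub>m N) $$ (i, j) = 1\<^sub>m (N * K + Ud) $$ (i, j)"
    by (auto simp: blkdiag_def mod_less_if_less_mult)
qed simp_all

lemma blkdiag_mult:
  fixes B C :: "nat \<Rightarrow> 'a :: comm_ring_1 mat"
  assumes B: "\<And>n. n < K \<Longrightarrow> B n \<in> carrier_mat N N"
    and C: "\<And>n. n < K \<Longrightarrow> C n \<in> carrier_mat N N"
  shows "blkdiag N K Ud B * blkdiag N K Ud C = blkdiag N K Ud (\<lambda>n. B n * C n)"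
proof (rule eq_matI)
  let ?n = "N * K + Ud" and ?B = "blkdiag N K Ud B" and ?C = "blkdiag N K Ud C"
  fix i j assume "i < dim_row (blkdiag N K Ud (\<lambda>n. B n * C n))"
    and "j < dim_col (blkdiag N K Ud (\<lambda>n. B n * C n))"
  then have i: "i < ?n" and j: "j < ?n" by simp_all
  have prod: "(?B * ?C) $$ (i, j) = (\<Sum>l<?n. ?B $$ (i, l) * ?C $$ (l, j))"
    using i j by (simp add: scalar_prod_def atLeast0LessThan)
  show "(?B * ?C) $$ (i, j) = blkdiag N K Ud (\<lambda>n. B n * C n) $$ (i, j)"
  proof (cases "i < N * K")
    case iK: True
    define a where "a = i div N"
    have N: "0 < N" using iK by (cases N) auto
    have a: "a < K" using div_less_if_less_mult[OF iK] by (simp add: a_def)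
    have "(?B * ?C) $$ (i, j) = (\<Sum>c<N. ?B $$ (i, a * N + c) * ?C $$ (a * N + c, j))"
      unfolding prod by (rule sum_supported_on_block[OF N a]) (use iK in \<open>auto simp: blkdiag_def a_def\<close>)
    also have "\<dots> = (\<Sum>c<N. B a $$ (i mod N, c) *
        (if j < N * K \<and> j div N = a then C a $$ (c, j mod N) else 0))"
      using iK i j a by (simp add: blkdiag_index_block_row blkdiag_index_block_col flip: a_def)
    also have "\<dots> = blkdiag N K Ud (\<lambda>n. B n * C n) $$ (i, j)"
    proof (cases "j < N * K \<and> j div N = a")
      case True
      have "i mod N < N" "j mod N < N" using N by simp_all
      then show ?thesis
        using True iK i j B[OF a] C[OF a]
        by (simp add: blkdiag_def scalar_prod_def atLeast0LessThan flip: a_def)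
    next
      case False
      then show ?thesis using iK i j by (auto simp: blkdiag_def a_def)
    qed
    finally show ?thesis .
  next
    case False
    have "(?B * ?C) $$ (i, j) = (\<Sum>l<?n. if l = i then ?C $$ (l, j) else 0)"
      unfolding prod by (rule sum.cong) (use False i in \<open>auto simp: blkdiag_def\<close>)
    then show ?thesis
      using False i j by (auto simp: blkdiag_def)
  qed
qed simp_all

lemma blkdiag_mult_blkdiag_inv:
  assumes Rdim: "\<And>n. n < K \<Longrightarrow> R n \<in> carrier_mat N N"
    and Rinv: "\<And>n. n < K \<Longrightarrow> invertible_mat (R n)"
  shows "blkdiag N K Ud R * blkdiag_inv N K Ud R = 1\<^sub>m (N * K + Ud)"
proof -
  have "blkdiag N K Ud R * blkdiag_inv N K Ud R = blkdiag N K Ud (\<lambda>n. R n * minv (R n))"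
    unfolding blkdiag_inv_eq_blkdiag by (rule blkdiag_mult) (simp_all add: Rdim minv_carrier)
  also have "\<dots> = blkdiag N K Ud (\<lambda>_. 1\<^sub>m N)"
    using Rdim Rinv invertible_mat_imp_det_nonzero mult_minv by (intro blkdiag_cong) blast
  finally show ?thesis
    unfolding blkdiag_one .
qed

lemma det_blkdiag_nonzero:
  fixes R :: "nat \<Rightarrow> complex mat"
  assumes "\<And>n. n < K \<Longrightarrow> R n \<in> carrier_mat N N"
    and "\<And>n. n < K \<Longrightarrow> invertible_mat (R n)"
  shows "det (blkdiag N K Ud R) \<noteq> 0"
proof
  assume "det (blkdiag N K Ud R) = 0"
  then have "det (blkdiag N K Ud R * blkdiag_inv N K Ud R) = 0"
    by (simp add: det_mult[OF blkdiag_carrier blkdiag_inv_carrier])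
  then show False
    by (simp add: blkdiag_mult_blkdiag_inv[OF assms])
qed

lemma row_sel_eq_block_rows_mult:
  assumes k: "k < K"
  shows "row_sel N K Ud R k = block_rows N (N * K + Ud) k * blkdiag N K Ud R"
proof (rule eq_matI)
  have rows: "block_rows N (N * K + Ud) k * blkdiag N K Ud R
      = mat N (N * K + Ud) (\<lambda>(a, j). blkdiag N K Ud R $$ (k * N + a, j))"
    by (rule block_rows_mult) (use block_end_le[OF k, of N] in simp_all)
  fix a j assume "a < dim_row (block_rows N (N * K + Ud) k * blkdiag N K Ud R)"
    and "j < dim_col (block_rows N (N * K + Ud) k * blkdiag N K Ud R)"
  then have a: "a < N" and j: "j < N * K + Ud" by simp_all
  have N: "0 < N" using a by simp
  have "(block_rows N (N * K + Ud) k * blkdiag N K Ud R) $$ (a, j)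
      = (if j < N * K \<and> j div N = k then R k $$ (a, j mod N) else 0)"
    using a j k by (simp add: rows blkdiag_index_block_row)
  also have "\<dots> = row_sel N K Ud R k $$ (a, j)"
  proof (cases "k * N \<le> j \<and> j < k * N + N")
    case True
    then have "j div N = k" using div_eq_iff_in_block[OF N] by blast
    then have "j mod N = j - k * N" using minus_div_mult_eq_mod[of j N] by simp
    moreover have "j < N * K" using True block_end_le[OF k, of N] by linarith
    ultimately show ?thesis using True \<open>j div N = k\<close> a j by (simp add: row_sel_def)
  next
    case False
    then show ?thesis using a j div_eq_iff_in_block[OF N] by (auto simp: row_sel_def)
  qed
  finally show "row_sel N K Ud R k $$ (a, j) = (block_rows N (N * K + Ud) k * blkdiag N K Ud R) $$ (a, j)"
    by simp
qed (simp_all add: row_sel_def)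

lemma f_vec_eq_ones:
  assumes k: "k < K"
    and Rdim: "\<And>n. n < K \<Longrightarrow> R n \<in> carrier_mat N N"
    and Rinv: "\<And>n. n < K \<Longrightarrow> invertible_mat (R n)"
  shows "f_vec N K Ud R k = vec N (\<lambda>_. 1)"
proof -
  let ?S = "block_rows N (N * K + Ud) k :: complex mat"
  have "row_sel N K Ud R k * blkdiag_inv N K Ud R = ?S * (blkdiag N K Ud R * blkdiag_inv N K Ud R)"
    unfolding row_sel_eq_block_rows_mult[OF k]
    by (rule assoc_mult_mat[OF block_rows_carrier blkdiag_carrier blkdiag_inv_carrier])
  also have "\<dots> = ?S"
    by (simp add: blkdiag_mult_blkdiag_inv[OF Rdim Rinv])
  finally show ?thesis
    unfolding f_vec_def using block_rows_Gamma[OF k] by simp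
qed

lemma Q2H_carrier [simp]: "Q2H M N K Ud H hdu \<in> carrier_mat M (N * K + Ud)"
  by (simp add: Q2H_def)

lemma block_rows_mult_cT_Q2H:
  assumes k: "k < K" and Hk: "H k \<in> carrier_mat M N"
  shows "block_rows N (N * K + Ud) k * cT (Q2H M N K Ud H hdu) = cT (H k)"
proof -
  have "block_rows N (N * K + Ud) k * cT (Q2H M N K Ud H hdu)
      = mat N M (\<lambda>(a, m). cT (Q2H M N K Ud H hdu) $$ (k * N + a, m))"
    by (rule block_rows_mult) (use block_end_le[OF k, of N] in simp_all)
  also have "\<dots> = cT (H k)"
  proof (rule eq_matI)
    fix a m assume "a < dim_row (cT (H k))" "m < dim_col (cT (H k))"
    then have a: "a < N" and m: "m < M" using Hk by auto
    moreover have "k * N + a < N * K" by (rule block_index_less[OF k a])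
    ultimately show "mat N M (\<lambda>(a, m). cT (Q2H M N K Ud H hdu) $$ (k * N + a, m)) $$ (a, m) = cT (H k) $$ (a, m)"
      using Hk by (simp add: cT_def Q2H_def)
  qed (use Hk in auto)
  finally show ?thesis .
qed

lemma zf_vec_eq_ones:
  assumes k: "k < K" and Hk: "H k \<in> carrier_mat M N"
    and det: "det (cT (Q2H M N K Ud H hdu) * Q2H M N K Ud H hdu) \<noteq> 0"
  shows "zf_vec M N K Ud H hdu k = vec N (\<lambda>_. 1)"
proof -
  let ?Q = "Q2H M N K Ud H hdu"
  let ?G = "cT ?Q * ?Q"
  let ?S = "block_rows N (N * K + Ud) k :: complex mat"
  have G: "?G \<in> carrier_mat (N * K + Ud) (N * K + Ud)"
    by (rule mult_carrier_mat[OF cT_carrier[OF Q2H_carrier] Q2H_carrier])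
  have "cT (H k) * ?Q = ?S * ?G"
    unfolding block_rows_mult_cT_Q2H[where H = H and hdu = hdu and Ud = Ud, OF k Hk, symmetric]
    by (rule assoc_mult_mat[OF block_rows_carrier cT_carrier[OF Q2H_carrier] Q2H_carrier])
  then have "cT (H k) * ?Q * minv ?G = ?S * (?G * minv ?G)"
    using assoc_mult_mat[OF block_rows_carrier G minv_carrier[OF G]] by simp
  also have "\<dots> = ?S"
    by (simp add: mult_minv[OF G det])
  finally show ?thesis
    unfolding zf_vec_def Let_def using block_rows_Gamma[OF k] by simp
qed

lemma gram_Q2H_index:
  fixes H :: "nat \<Rightarrow> complex mat" and hdu :: "nat \<Rightarrow> complex vec"
  assumes Hdim: "\<And>n. n < K \<Longrightarrow> H n \<in> carrier_mat M N"
    and hddim: "\<And>u. u < Ud \<Longrightarrow> dim_vec (hdu u) = M"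
    and i: "i < N * K + Ud" and j: "j < N * K + Ud"
  shows "(cT (Q2H M N K Ud H hdu) * Q2H M N K Ud H hdu) $$ (i, j) =
    (if i < N * K then
       if j < N * K then (cT (H (i div N)) * H (j div N)) $$ (i mod N, j mod N)
       else (cT (H (i div N)) *\<^sub>v hdu (j - N * K)) $ (i mod N)
     else if j < N * K then cnj ((cT (H (j div N)) *\<^sub>v hdu (i - N * K)) $ (j mod N))
     else (\<Sum>l<M. cnj (hdu (i - N * K) $ l) * hdu (j - N * K) $ l))"
proof -
  let ?Q = "Q2H M N K Ud H hdu"
  note mod = mod_less_if_less_mult[of _ N K]
  have Q_RIS: "?Q $$ (l, c) = H (c div N) $$ (l, c mod N)" if "l < M" "c < N * K" for l c
    using that by (simp add: Q2H_def)
  have Q_direct: "?Q $$ (l, c) = hdu (c - N * K) $ l" if "l < M" "\<not> c < N * K" "c < N * K + Ud" for l c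
    using that by (simp add: Q2H_def)
  have gram: "(cT ?Q * ?Q) $$ (i, j) = (\<Sum>l<M. cnj (?Q $$ (l, i)) * ?Q $$ (l, j))"
    by (rule cT_mult_index) (use i j in simp_all)
  consider (RIS_RIS) "i < N * K" "j < N * K" | (RIS_direct) "i < N * K" "\<not> j < N * K"
    | (direct_RIS) "\<not> i < N * K" "j < N * K" | (direct_direct) "\<not> i < N * K" "\<not> j < N * K"
    by blast
  then show ?thesis
  proof cases
    case RIS_RIS
    then show ?thesis
      using cT_mult_index[OF Hdim[OF div_less_if_less_mult] Hdim[OF div_less_if_less_mult] mod mod, OF RIS_RIS RIS_RIS]
      by (simp add: gram Q_RIS)
  next
    case RIS_direct
    have "j - N * K < Ud" using RIS_direct j by linarith
    then show ?thesis
      using RIS_direct j cT_mult_vec_index[OF Hdim[OF div_less_if_less_mult] hddim mod, OF RIS_direct(1) _ RIS_direct(1)]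
      by (simp add: gram Q_RIS Q_direct)
  next
    case direct_RIS
    have "cnj ((cT (H (j div N)) *\<^sub>v hdu (i - N * K)) $ (j mod N))
        = (\<Sum>l<M. H (j div N) $$ (l, j mod N) * cnj (hdu (i - N * K) $ l))"
    proof -
      have "i - N * K < Ud" using direct_RIS i by linarith
      then show ?thesis
        using cT_mult_vec_index[OF Hdim[OF div_less_if_less_mult] hddim mod, OF direct_RIS(2) _ direct_RIS(2)]
        by (simp add: cnj_sum)
    qed
    then show ?thesis
      using direct_RIS i by (simp add: gram Q_RIS Q_direct mult.commute)
  next
    case direct_direct
    then show ?thesis
      using i j by (simp add: gram Q_direct)
  qed
qed

lemma gram_Q2H_tendsto:
  fixes H :: "nat \<Rightarrow> nat \<Rightarrow> complex mat" and hdu :: "nat \<Rightarrow> nat \<Rightarrow> complex vec"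
  assumes Hdim: "\<And>M n. n < K \<Longrightarrow> H M n \<in> carrier_mat M N"
    and hddim: "\<And>M u. u < Ud \<Longrightarrow> dim_vec (hdu M u) = M"
    and Rdim: "\<And>n. n < K \<Longrightarrow> R n \<in> carrier_mat N N"
    and lim_HH: "\<And>n n'. n < K \<Longrightarrow> n' < K \<Longrightarrow>
        mat_tendsto (\<lambda>M. cT (H M n) * H M n') (if n = n' then R n else 0\<^sub>m N N)"
    and lim_Hhd: "\<And>n u. n < K \<Longrightarrow> u < Ud \<Longrightarrow>
        vec_tendsto (\<lambda>M. cT (H M n) *\<^sub>v hdu M u) (0\<^sub>v N)"
    and lim_hdhd: "\<And>u u'. u < Ud \<Longrightarrow> u' < Ud \<Longrightarrow>
        ((\<lambda>M. \<Sum>i<M. cnj (hdu M u $ i) * hdu M u' $ i) \<longlongrightarrow> (if u = u' then 1 else 0)) sequentially"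
  shows "mat_tendsto (\<lambda>M. cT (Q2H M N K Ud (H M) (hdu M)) * Q2H M N K Ud (H M) (hdu M))
      (blkdiag N K Ud R)"
  unfolding mat_tendsto_def
proof (intro conjI allI impI)
  show "\<forall>\<^sub>F M in sequentially. cT (Q2H M N K Ud (H M) (hdu M)) * Q2H M N K Ud (H M) (hdu M)
      \<in> carrier_mat (dim_row (blkdiag N K Ud R)) (dim_col (blkdiag N K Ud R))"
    using mult_carrier_mat[OF cT_carrier[OF Q2H_carrier] Q2H_carrier] by simp
  fix i j assume "i < dim_row (blkdiag N K Ud R)" "j < dim_col (blkdiag N K Ud R)"
  then have i: "i < N * K + Ud" and j: "j < N * K + Ud" by simp_all
  note gram = gram_Q2H_index[OF Hdim hddim i j]
  note mod = mod_less_if_less_mult[of _ N K]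
  consider (RIS_RIS) "i < N * K" "j < N * K" | (RIS_direct) "i < N * K" "\<not> j < N * K"
    | (direct_RIS) "\<not> i < N * K" "j < N * K" | (direct_direct) "\<not> i < N * K" "\<not> j < N * K"
    by blast
  then show "((\<lambda>M. (cT (Q2H M N K Ud (H M) (hdu M)) * Q2H M N K Ud (H M) (hdu M)) $$ (i, j))
      \<longlongrightarrow> blkdiag N K Ud R $$ (i, j)) sequentially"
  proof cases
    case RIS_RIS
    let ?C = "if i div N = j div N then R (i div N) else 0\<^sub>m N N"
    have "mat_tendsto (\<lambda>M. cT (H M (i div N)) * H M (j div N)) ?C"
      using lim_HH div_less_if_less_mult RIS_RIS by blast
    moreover have "?C \<in> carrier_mat N N"
      using Rdim div_less_if_less_mult[OF RIS_RIS(1)] by simp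
    ultimately have "((\<lambda>M. (cT (H M (i div N)) * H M (j div N)) $$ (i mod N, j mod N))
        \<longlongrightarrow> ?C $$ (i mod N, j mod N)) sequentially"
      using mat_tendsto_index mod RIS_RIS by auto
    moreover have "blkdiag N K Ud R $$ (i, j) = ?C $$ (i mod N, j mod N)"
      using RIS_RIS i j mod by (simp add: blkdiag_def)
    ultimately show ?thesis
      using RIS_RIS by (simp add: gram)
  next
    case RIS_direct
    have "j - N * K < Ud" using RIS_direct j by linarith
    then have "((\<lambda>M. (cT (H M (i div N)) *\<^sub>v hdu M (j - N * K)) $ (i mod N)) \<longlongrightarrow> 0) sequentially"
      using vec_tendsto_index[OF lim_Hhd[OF div_less_if_less_mult]] mod RIS_direct by simp
    then show ?thesis
      using RIS_direct i j by (simp add: gram blkdiag_def)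
  next
    case direct_RIS
    have "i - N * K < Ud" using direct_RIS i by linarith
    then have "((\<lambda>M. (cT (H M (j div N)) *\<^sub>v hdu M (i - N * K)) $ (j mod N)) \<longlongrightarrow> 0) sequentially"
      using vec_tendsto_index[OF lim_Hhd[OF div_less_if_less_mult]] mod direct_RIS by simp
    then have "((\<lambda>M. cnj ((cT (H M (j div N)) *\<^sub>v hdu M (i - N * K)) $ (j mod N))) \<longlongrightarrow> cnj 0) sequentially"
      by (rule tendsto_cnj)
    then show ?thesis
      using direct_RIS i j by (simp add: gram blkdiag_def)
  next
    case direct_direct
    have "i - N * K < Ud" "j - N * K < Ud" using direct_direct i j by linarith+
    moreover have "blkdiag N K Ud R $$ (i, j) = (if i - N * K = j - N * K then 1 else 0)"
      using direct_direct i j by (auto simp: blkdiag_def)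
    ultimately show ?thesis
      using lim_hdhd direct_direct by (simp add: gram)
  qed
qed

lemma exp_minus_Arg_mult: "exp (\<i> * complex_of_real (- Arg z)) * z = complex_of_real (cmod z)"
proof -
  have "exp (\<i> * complex_of_real (- Arg z)) = cis (- Arg z)"
    by (simp add: cis_conv_exp)
  moreover have "z = complex_of_real (cmod z) * cis (Arg z)"
    using rcis_cmod_Arg[of z] by (simp add: rcis_def)
  ultimately have "exp (\<i> * complex_of_real (- Arg z)) * z
      = complex_of_real (cmod z) * (cis (- Arg z) * cis (Arg z))"
    by (metis mult.left_commute)
  also have "\<dots> = complex_of_real (cmod z)"
    by (simp add: cis_mult)
  finally show ?thesis .
qed

lemma norm_sum_rotated_le:
  "cmod (\<Sum>i\<in>A. exp (\<i> * complex_of_real (phi i)) * z i) \<le> (\<Sum>i\<in>A. cmod (z i))"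
proof -
  have "cmod (\<Sum>i\<in>A. exp (\<i> * complex_of_real (phi i)) * z i)
      \<le> (\<Sum>i\<in>A. cmod (exp (\<i> * complex_of_real (phi i)) * z i))"
    by (rule norm_sum)
  also have "\<dots> = (\<Sum>i\<in>A. cmod (z i))"
    by (simp add: norm_mult norm_exp_i_times)
  finally show ?thesis .
qed

lemma sum_rotated_by_minus_Arg:
  "(\<Sum>i\<in>A. exp (\<i> * complex_of_real (- Arg (z i))) * z i) = complex_of_real (\<Sum>i\<in>A. cmod (z i))"
  by (simp only: exp_minus_Arg_mult of_real_sum)

lemma sinr_eq:
  "sinr N sigma2 h v phi
    = (cmod (\<Sum>i<N. exp (\<i> * complex_of_real (phi i)) * (cnj (h $ i) * v $ i)))\<^sup>2 / sigma2"
  by (simp add: sinr_def mult.assoc)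

lemma sinr_aligned:
  "sinr N sigma2 h v (\<lambda>i. - Arg (cnj (h $ i) * v $ i))
    = (\<Sum>i<N. cmod (v $ i) * cmod (h $ i))\<^sup>2 / sigma2"
proof -
  have "(\<Sum>i<N. cmod (cnj (h $ i) * v $ i)) = (\<Sum>i<N. cmod (v $ i) * cmod (h $ i))"
    by (simp add: norm_mult mult.commute)
  then show ?thesis
    unfolding sinr_eq sum_rotated_by_minus_Arg norm_of_real by (simp add: sum_nonneg)
qed

lemma sinr_le_sinr_aligned:
  assumes "0 < sigma2"
  shows "sinr N sigma2 h v phi \<le> sinr N sigma2 h v (\<lambda>i. - Arg (cnj (h $ i) * v $ i))"
proof -
  have "cmod (\<Sum>i<N. exp (\<i> * complex_of_real (phi i)) * (cnj (h $ i) * v $ i))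
      \<le> (\<Sum>i<N. cmod (v $ i) * cmod (h $ i))"
    using norm_sum_rotated_le[of phi "\<lambda>i. cnj (h $ i) * v $ i" "{..<N}"]
    by (simp add: norm_mult mult.commute)
  then show ?thesis
    unfolding sinr_aligned using assms by (simp add: sinr_eq divide_right_mono power_mono)
qed

theorem proposition2:
  fixes N K Ud k :: nat
    and H :: "nat \<Rightarrow> nat \<Rightarrow> complex mat"   \<comment> \<open>H M n: BS--RIS-n channel with M BS antennas\<close>
    and hdu :: "nat \<Rightarrow> nat \<Rightarrow> complex vec"   \<comment> \<open>hdu M u: BS--direct-user-u channel\<close>
    and R :: "nat \<Rightarrow> complex mat"
    and h :: "complex vec"                   \<comment> \<open>RIS-k--user channel h_{k,1}\<close>
    and sigma2 :: real
  assumes k: "k < K"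
    and sigma: "sigma2 > 0"
    and hdim: "dim_vec h = N"
    and Hdim: "\<And>M n. n < K \<Longrightarrow> H M n \<in> carrier_mat M N"
    and hddim: "\<And>M u. u < Ud \<Longrightarrow> dim_vec (hdu M u) = M"
    and Rdim: "\<And>n. n < K \<Longrightarrow> R n \<in> carrier_mat N N"
    and Rinv: "\<And>n. n < K \<Longrightarrow> invertible_mat (R n)"
    and lim_HH: "\<And>n n'. n < K \<Longrightarrow> n' < K \<Longrightarrow>
        mat_tendsto (\<lambda>M. cT (H M n) * H M n') (if n = n' then R n else 0\<^sub>m N N)"
    and lim_Hhd: "\<And>n u. n < K \<Longrightarrow> u < Ud \<Longrightarrow>
        vec_tendsto (\<lambda>M. cT (H M n) *\<^sub>v hdu M u) (0\<^sub>v N)"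
    and lim_hdhd: "\<And>u u'. u < Ud \<Longrightarrow> u' < Ud \<Longrightarrow>
        ((\<lambda>M. \<Sum>i<M. cnj (hdu M u $ i) * hdu M u' $ i) \<longlongrightarrow> (if u = u' then 1 else 0)) sequentially"
  shows "(\<forall>phi. ((\<lambda>M. sinr N sigma2 h (zf_vec M N K Ud (H M) (hdu M) k) phi)
                   \<longlongrightarrow> sinr N sigma2 h (f_vec N K Ud R k) phi) sequentially)
       \<and> (let f = f_vec N K Ud R k;
              phiopt = (\<lambda>i. - Arg (cnj (h $ i) * f $ i))
          in (\<forall>phi. sinr N sigma2 h f phi \<le> sinr N sigma2 h f phiopt)
             \<and> sinr N sigma2 h f phiopt = (\<Sum>i<N. cmod (f $ i) * cmod (h $ i))\<^sup>2 / sigma2)"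
proof -
  let ?Q = "\<lambda>M. Q2H M N K Ud (H M) (hdu M)"
  have "((\<lambda>M. det (cT (?Q M) * ?Q M)) \<longlongrightarrow> det (blkdiag N K Ud R)) sequentially"
    by (rule tendsto_det[OF gram_Q2H_tendsto[OF Hdim hddim Rdim lim_HH lim_Hhd lim_hdhd] blkdiag_carrier])
  then have "\<forall>\<^sub>F M in sequentially. det (cT (?Q M) * ?Q M) \<noteq> 0"
    by (rule tendsto_imp_eventually_ne) (rule det_blkdiag_nonzero[OF Rdim Rinv])
  then have zf_eventually: "\<forall>\<^sub>F M in sequentially. zf_vec M N K Ud (H M) (hdu M) k = f_vec N K Ud R k"
    by (rule eventually_mono)
      (simp add: zf_vec_eq_ones[where H = "H _", OF k Hdim[OF k]] f_vec_eq_ones[OF k Rdim Rinv])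
  have "((\<lambda>M. sinr N sigma2 h (zf_vec M N K Ud (H M) (hdu M) k) phi)
      \<longlongrightarrow> sinr N sigma2 h (f_vec N K Ud R k) phi) sequentially" for phi
    by (rule tendsto_eventually) (use zf_eventually in \<open>auto elim: eventually_mono\<close>)
  then show ?thesis
    using sinr_le_sinr_aligned[OF sigma] sinr_aligned unfolding Let_def by blast
qed

end
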